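(* Let $L>0$, let $p_{\rm ext}\in\mathbb{R}$ be a constant, and let $\bar\ell:\mathcal{U}\to\mathbb{R}$ be a smooth function of four real variables, defined on an open set $\mathcal{U}\subset\mathbb{R}^4$ and written $\bar\ell=\bar\ell(A,A_t,A_s,u)$ (it does not depend explicitly on $s$ or $t$). Let $A,u,p$ be smooth real functions of $(s,t)\in(\mathbb{R}/L\mathbb{Z})\times I$, $I$ an open time interval, with $(A,A_t,A_s,u)(s,t)\in\mathcal{U}$, satisfying $$\partial_t \frac{\partial\bar\ell}{\partial u}+u\,\partial_s\frac{\partial\bar\ell}{\partial u}+2\frac{\partial\bar\ell}{\partial u}\,\partial_s u=-A\,\partial_s p,$$ $$\partial_t\frac{\partial\bar\ell}{\partial A_t}+\partial_s\frac{\partial\bar\ell}{\partial A_s}-\frac{\partial\bar\ell}{\partial A}=p-p_{\rm ext},$$ $$\partial_t A+\partial_s(Au)=0,$$ where all partial derivatives of $\bar\ell$ are evaluated at $(A(s,t),\partial_tA(s,t),\partial_sA(s,t),u(s,t))$. Then the quantity $$E(t)=\int_0^L\Big(\frac{\partial\bar\ell}{\partial A_t}\,\partial_tA+\frac{\partial\bar\ell}{\partial u}\,u-\bar\ell\Big)\,\mathrm{d}s$$ is independent of $t\in I$.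
   Context: This system models an inextensible, unshearable fluid-conveying tube with straight centerline: $s$ is the coordinate along the tube, $A(s,t)$ the cross-sectional area, $u(s,t)$ the fluid velocity, $p$ the fluid pressure (Lagrange multiplier for incompressibility), $p_{\rm ext}$ the external pressure, and $\bar\ell$ the Lagrangian density (with the swirl circulation frozen at a constant value). Periodic boundary conditions in $s$ are assumed. *)

theory Defs
  imports "HOL-Analysis.Analysis"
begin

fun dirderivs :: "'a::real_normed_vector list \<Rightarrow> ('a \<Rightarrow> real) \<Rightarrow> ('a \<Rightarrow> real)" where
  "dirderivs [] f = f"
| "dirderivs (v # vs) f = (\<lambda>x. frechet_derivative (dirderivs vs f) (at x) v)"

text \<open>C-infinity smoothness on an open set: every iterated directional derivative
  exists and is differentiable at every point of the set (hence all partial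
  derivatives of all orders exist and are continuous there).\<close>
definition smooth_on :: "'a::real_normed_vector set \<Rightarrow> ('a \<Rightarrow> real) \<Rightarrow> bool" where
  "smooth_on S f \<longleftrightarrow> (\<forall>vs. \<forall>x\<in>S. dirderivs vs f differentiable (at x))"

definition ds :: "(real \<Rightarrow> real \<Rightarrow> real) \<Rightarrow> real \<Rightarrow> real \<Rightarrow> real" where
  "ds f s t = deriv (\<lambda>\<sigma>. f \<sigma> t) s"

definition dt :: "(real \<Rightarrow> real \<Rightarrow> real) \<Rightarrow> real \<Rightarrow> real \<Rightarrow> real" where
  "dt f s t = deriv (\<lambda>\<tau>. f s \<tau>) t"

definition pdiff :: "('a::real_normed_vector \<Rightarrow> real) \<Rightarrow> 'a \<Rightarrow> 'a \<Rightarrow> real" where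
  "pdiff l v q = frechet_derivative l (at q) v"

type_synonym R4 = "real \<times> real \<times> real \<times> real"

abbreviation eA :: R4 where "eA \<equiv> (1, 0, 0, 0)"
abbreviation eAt :: R4 where "eAt \<equiv> (0, 1, 0, 0)"
abbreviation eAs :: R4 where "eAs \<equiv> (0, 0, 1, 0)"
abbreviation eu :: R4 where "eu \<equiv> (0, 0, 0, 1)"

end

theory Submission
  imports Defs
begin

text \<open>Since the Lagrangian does not depend explicitly on time, the energy density
  e = l_{A_t} A_t + l_u u - l obeys a local conservation law \<partial>_t e + \<partial>_s G = 0 along
  solutions, with flux G = l_{A_s} A_t + u^2 l_u + (p - p_ext) A u. This follows from the chain
  rule for l along the jet (A, A_t, A_s, u), the two equations of motion, mass conservation and
  the symmetry of the mixed partial derivatives of A. Differentiating E under the integral sign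
  therefore gives E' = G(0) - G(L), which vanishes by periodicity.\<close>

lemma dirderivs_append: "dirderivs vs (dirderivs ws f) = dirderivs (vs @ ws) f"
  by (induction vs) auto

lemma smooth_on_dirderivs: "smooth_on S f \<Longrightarrow> smooth_on S (dirderivs vs f)"
  unfolding smooth_on_def by (simp add: dirderivs_append)

lemma smooth_on_imp_differentiable: "smooth_on S f \<Longrightarrow> x \<in> S \<Longrightarrow> f differentiable (at x)"
  unfolding smooth_on_def by (metis dirderivs.simps(1))

lemma smooth_on_imp_continuous_on: "smooth_on S f \<Longrightarrow> continuous_on S f"
  by (rule differentiable_imp_continuous_on)
     (auto simp: differentiable_on_def intro: differentiable_at_withinI smooth_on_imp_differentiable)

lemma smooth_on_pdiff: "smooth_on S f \<Longrightarrow> smooth_on S (pdiff f v)"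
  unfolding pdiff_def using smooth_on_dirderivs[of S f "[v]"] by simp

lemma has_real_derivative_frechet_derivative_comp:
  fixes F :: "'a::real_normed_vector \<Rightarrow> real"
  assumes F: "F differentiable (at (\<gamma> x))" and \<gamma>: "(\<gamma> has_vector_derivative v) (at x)"
  shows "((\<lambda>y. F (\<gamma> y)) has_real_derivative frechet_derivative F (at (\<gamma> x)) v) (at x)"
proof -
  let ?D = "frechet_derivative F (at (\<gamma> x))"
  have D: "(F has_derivative ?D) (at (\<gamma> x))" using F frechet_derivative_works by blast
  have "((\<lambda>y. F (\<gamma> y)) has_derivative (\<lambda>h. ?D (h *\<^sub>R v))) (at x)"
    using has_derivative_compose[OF \<gamma>[unfolded has_vector_derivative_def] D] by simp
  moreover have "(\<lambda>h. ?D (h *\<^sub>R v)) = (*) (?D v)"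
    using linear_scale[OF has_derivative_linear[OF D]] by (simp add: fun_eq_iff)
  ultimately show ?thesis by (simp add: has_field_derivative_def)
qed

lemma frechet_derivative_R4:
  fixes F :: "R4 \<Rightarrow> real"
  assumes "F differentiable (at q)"
  shows "frechet_derivative F (at q) (a, b, c, d) =
    a * pdiff F eA q + b * pdiff F eAt q + c * pdiff F eAs q + d * pdiff F eu q"
proof -
  have lin: "linear (frechet_derivative F (at q))"
    using assms frechet_derivative_works has_derivative_linear by blast
  have "(a, b, c, d) = a *\<^sub>R eA + b *\<^sub>R eAt + c *\<^sub>R eAs + d *\<^sub>R eu" by simp
  then show ?thesis
    by (simp only: linear_add[OF lin] linear_scale[OF lin] real_scaleR_def pdiff_def)
qed

lemma has_real_derivative_R4_comp:
  fixes F :: "R4 \<Rightarrow> real"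
  assumes F: "F differentiable (at (a x, b x, c x, d x))"
    and "(a has_real_derivative a') (at x)" "(b has_real_derivative b') (at x)"
    and "(c has_real_derivative c') (at x)" "(d has_real_derivative d') (at x)"
  shows "((\<lambda>y. F (a y, b y, c y, d y)) has_real_derivative
      a' * pdiff F eA (a x, b x, c x, d x) + b' * pdiff F eAt (a x, b x, c x, d x)
    + c' * pdiff F eAs (a x, b x, c x, d x) + d' * pdiff F eu (a x, b x, c x, d x)) (at x)"
proof -
  have "((\<lambda>y. (a y, b y, c y, d y)) has_vector_derivative (a', b', c', d')) (at x)"
    using assms(2-5) unfolding has_real_derivative_iff_has_vector_derivative
    by (intro has_vector_derivative_Pair)
  from has_real_derivative_frechet_derivative_comp[OF F this] show ?thesis
    by (simp only: frechet_derivative_R4[OF F])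
qed

lemma ds_eqI: "((\<lambda>\<sigma>. f \<sigma> t) has_real_derivative D) (at s) \<Longrightarrow> ds f s t = D"
  unfolding ds_def by (rule DERIV_imp_deriv)

lemma dt_eqI: "((\<lambda>\<tau>. f s \<tau>) has_real_derivative D) (at t) \<Longrightarrow> dt f s t = D"
  unfolding dt_def by (rule DERIV_imp_deriv)

lemma ds_const [simp]: "ds (\<lambda>s t. c) s t = 0"
  by (rule ds_eqI) simp

lemma ds_periodic:
  assumes "((\<lambda>\<sigma>. f \<sigma> t) has_real_derivative ds f (s + L) t) (at (s + L))"
    and "\<And>\<sigma>. f (\<sigma> + L) t = f \<sigma> t"
  shows "ds f (s + L) t = ds f s t"
proof -
  have "((\<lambda>\<sigma>. f (\<sigma> + L) t) has_real_derivative ds f (s + L) t) (at s)"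
    using assms(1) by (simp add: DERIV_shift)
  then show ?thesis using assms(2) by (intro ds_eqI[symmetric]) simp
qed

lemma dt_periodic: "(\<And>\<tau>. f (s + L) \<tau> = f s \<tau>) \<Longrightarrow> dt f (s + L) t = dt f s t"
  unfolding dt_def by presburger

definition C1_strip :: "real set \<Rightarrow> (real \<Rightarrow> real \<Rightarrow> real) \<Rightarrow> bool" where
  "C1_strip I f \<longleftrightarrow>
     (\<forall>s. \<forall>t\<in>I. ((\<lambda>\<sigma>. f \<sigma> t) has_real_derivative ds f s t) (at s)
        \<and> ((\<lambda>\<tau>. f s \<tau>) has_real_derivative dt f s t) (at t))
   \<and> continuous_on (UNIV \<times> I) (\<lambda>x. f (fst x) (snd x))
   \<and> continuous_on (UNIV \<times> I) (\<lambda>x. ds f (fst x) (snd x))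
   \<and> continuous_on (UNIV \<times> I) (\<lambda>x. dt f (fst x) (snd x))"

lemma
  assumes "C1_strip I f"
  shows C1_strip_has_ds: "t \<in> I \<Longrightarrow> ((\<lambda>\<sigma>. f \<sigma> t) has_real_derivative ds f s t) (at s)"
    and C1_strip_has_dt: "t \<in> I \<Longrightarrow> ((\<lambda>\<tau>. f s \<tau>) has_real_derivative dt f s t) (at t)"
    and C1_strip_continuous: "continuous_on (UNIV \<times> I) (\<lambda>x. f (fst x) (snd x))"
    and C1_strip_continuous_ds: "continuous_on (UNIV \<times> I) (\<lambda>x. ds f (fst x) (snd x))"
    and C1_strip_continuous_dt: "continuous_on (UNIV \<times> I) (\<lambda>x. dt f (fst x) (snd x))"
  using assms unfolding C1_strip_def by blast+

lemma C1_stripI: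
  assumes "\<And>s t. t \<in> I \<Longrightarrow> ((\<lambda>\<sigma>. f \<sigma> t) has_real_derivative Fs s t) (at s)"
    and "\<And>s t. t \<in> I \<Longrightarrow> ((\<lambda>\<tau>. f s \<tau>) has_real_derivative Ft s t) (at t)"
    and "continuous_on (UNIV \<times> I) (\<lambda>x. f (fst x) (snd x))"
    and "continuous_on (UNIV \<times> I) (\<lambda>x. Fs (fst x) (snd x))"
    and "continuous_on (UNIV \<times> I) (\<lambda>x. Ft (fst x) (snd x))"
  shows "C1_strip I f"
proof -
  have "ds f s t = Fs s t" "dt f s t = Ft s t" if "t \<in> I" for s t
    using assms(1,2)[OF that] by (auto intro: ds_eqI dt_eqI)
  then show ?thesis
    unfolding C1_strip_def using assms
    by (auto intro: continuous_on_eq[OF assms(4)] continuous_on_eq[OF assms(5)])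
qed

lemma
  assumes F: "smooth_on (UNIV \<times> I) F" and I: "open I"
    and f: "\<And>s t. t \<in> I \<Longrightarrow> f s t = F (s, t)"
  shows C1_strip_if_smooth_on: "C1_strip I f"
    and ds_eq_dirderivs: "t \<in> I \<Longrightarrow> ds f s t = dirderivs [(1, 0)] F (s, t)"
    and dt_eq_dirderivs: "t \<in> I \<Longrightarrow> dt f s t = dirderivs [(0, 1)] F (s, t)"
proof -
  have F': "F differentiable (at (s, t))" if "t \<in> I" for s t
    using smooth_on_imp_differentiable[OF F] that by simp
  have Ds: "((\<lambda>\<sigma>. f \<sigma> t) has_real_derivative dirderivs [(1, 0)] F (s, t)) (at s)"
    if "t \<in> I" for s t
  proof -
    have "((\<lambda>\<sigma>. (\<sigma>, t)) has_vector_derivative (1, 0)) (at s)"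
      by (auto intro!: derivative_eq_intros)
    from has_real_derivative_frechet_derivative_comp[OF F'[OF that] this] show ?thesis
      using f[OF that] by simp
  qed
  have Dt: "((\<lambda>\<tau>. f s \<tau>) has_real_derivative dirderivs [(0, 1)] F (s, t)) (at t)"
    if "t \<in> I" for s t
  proof -
    have "((\<lambda>\<tau>. (s, \<tau>)) has_vector_derivative (0, 1)) (at t)"
      by (auto intro!: derivative_eq_intros)
    from has_real_derivative_frechet_derivative_comp[OF F'[OF that] this]
    have "((\<lambda>\<tau>. F (s, \<tau>)) has_real_derivative dirderivs [(0, 1)] F (s, t)) (at t)"
      by simp
    then show ?thesis
      by (rule has_field_derivative_transform_within_open[OF _ I that]) (simp add: f)
  qed
  have "continuous_on (UNIV \<times> I) (\<lambda>x. dirderivs vs F (fst x, snd x))" for vs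
    using smooth_on_imp_continuous_on[OF smooth_on_dirderivs[OF F]] by simp
  moreover have "continuous_on (UNIV \<times> I) (\<lambda>x. f (fst x) (snd x))"
    using smooth_on_imp_continuous_on[OF F] by (rule continuous_on_eq) (auto simp: f)
  ultimately show "C1_strip I f"
    by (intro C1_stripI[OF Ds Dt])
  show "t \<in> I \<Longrightarrow> ds f s t = dirderivs [(1, 0)] F (s, t)" by (rule ds_eqI) (rule Ds)
  show "t \<in> I \<Longrightarrow> dt f s t = dirderivs [(0, 1)] F (s, t)" by (rule dt_eqI) (rule Dt)
qed

lemma
  assumes f: "smooth_on (UNIV \<times> I) (\<lambda>(s, t). f s t)" and I: "open I"
  shows C1_strip_smooth: "C1_strip I f"
    and C1_strip_ds_smooth: "C1_strip I (ds f)"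
    and C1_strip_dt_smooth: "C1_strip I (dt f)"
proof -
  show "C1_strip I f" by (rule C1_strip_if_smooth_on[OF f I]) simp
  have "t \<in> I \<Longrightarrow> ds f s t = dirderivs [(1, 0)] (\<lambda>(s, t). f s t) (s, t)" for s t
    by (rule ds_eq_dirderivs[OF f I]) simp_all
  then show "C1_strip I (ds f)" by (rule C1_strip_if_smooth_on[OF smooth_on_dirderivs[OF f] I])
  have "t \<in> I \<Longrightarrow> dt f s t = dirderivs [(0, 1)] (\<lambda>(s, t). f s t) (s, t)" for s t
    by (rule dt_eq_dirderivs[OF f I]) simp_all
  then show "C1_strip I (dt f)" by (rule C1_strip_if_smooth_on[OF smooth_on_dirderivs[OF f] I])
qed

lemma C1_strip_const [simp]: "C1_strip I (\<lambda>s t. c)"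
  by (rule C1_stripI[where Fs = "\<lambda>s t. 0" and Ft = "\<lambda>s t. 0"]) (auto intro: continuous_intros)

lemma
  assumes f: "C1_strip I f" and g: "C1_strip I g"
  shows C1_strip_add [simp]: "C1_strip I (\<lambda>s t. f s t + g s t)"
    and ds_add: "t \<in> I \<Longrightarrow> ds (\<lambda>s t. f s t + g s t) s t = ds f s t + ds g s t"
    and dt_add: "t \<in> I \<Longrightarrow> dt (\<lambda>s t. f s t + g s t) s t = dt f s t + dt g s t"
proof -
  have Ds: "t \<in> I \<Longrightarrow>
      ((\<lambda>\<sigma>. f \<sigma> t + g \<sigma> t) has_real_derivative ds f s t + ds g s t) (at s)" for s t
    using DERIV_add[OF C1_strip_has_ds[OF f] C1_strip_has_ds[OF g]] .
  have Dt: "t \<in> I \<Longrightarrow>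
      ((\<lambda>\<tau>. f s \<tau> + g s \<tau>) has_real_derivative dt f s t + dt g s t) (at t)" for s t
    using DERIV_add[OF C1_strip_has_dt[OF f] C1_strip_has_dt[OF g]] .
  show "C1_strip I (\<lambda>s t. f s t + g s t)"
    by (intro C1_stripI[OF Ds Dt] continuous_on_add C1_strip_continuous[OF f] C1_strip_continuous[OF g]
        C1_strip_continuous_ds[OF f] C1_strip_continuous_ds[OF g]
        C1_strip_continuous_dt[OF f] C1_strip_continuous_dt[OF g])
  show "t \<in> I \<Longrightarrow> ds (\<lambda>s t. f s t + g s t) s t = ds f s t + ds g s t" by (rule ds_eqI) (rule Ds)
  show "t \<in> I \<Longrightarrow> dt (\<lambda>s t. f s t + g s t) s t = dt f s t + dt g s t" by (rule dt_eqI) (rule Dt)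
qed

lemma
  assumes f: "C1_strip I f" and g: "C1_strip I g"
  shows C1_strip_diff [simp]: "C1_strip I (\<lambda>s t. f s t - g s t)"
    and ds_diff: "t \<in> I \<Longrightarrow> ds (\<lambda>s t. f s t - g s t) s t = ds f s t - ds g s t"
    and dt_diff: "t \<in> I \<Longrightarrow> dt (\<lambda>s t. f s t - g s t) s t = dt f s t - dt g s t"
proof -
  have Ds: "t \<in> I \<Longrightarrow>
      ((\<lambda>\<sigma>. f \<sigma> t - g \<sigma> t) has_real_derivative ds f s t - ds g s t) (at s)" for s t
    using DERIV_diff[OF C1_strip_has_ds[OF f] C1_strip_has_ds[OF g]] .
  have Dt: "t \<in> I \<Longrightarrow>
      ((\<lambda>\<tau>. f s \<tau> - g s \<tau>) has_real_derivative dt f s t - dt g s t) (at t)" for s t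
    using DERIV_diff[OF C1_strip_has_dt[OF f] C1_strip_has_dt[OF g]] .
  show "C1_strip I (\<lambda>s t. f s t - g s t)"
    by (intro C1_stripI[OF Ds Dt] continuous_on_diff C1_strip_continuous[OF f] C1_strip_continuous[OF g]
        C1_strip_continuous_ds[OF f] C1_strip_continuous_ds[OF g]
        C1_strip_continuous_dt[OF f] C1_strip_continuous_dt[OF g])
  show "t \<in> I \<Longrightarrow> ds (\<lambda>s t. f s t - g s t) s t = ds f s t - ds g s t" by (rule ds_eqI) (rule Ds)
  show "t \<in> I \<Longrightarrow> dt (\<lambda>s t. f s t - g s t) s t = dt f s t - dt g s t" by (rule dt_eqI) (rule Dt)
qed

lemma
  assumes f: "C1_strip I f" and g: "C1_strip I g"
  shows C1_strip_mult [simp]: "C1_strip I (\<lambda>s t. f s t * g s t)"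
    and ds_mult: "t \<in> I \<Longrightarrow>
      ds (\<lambda>s t. f s t * g s t) s t = ds f s t * g s t + f s t * ds g s t"
    and dt_mult: "t \<in> I \<Longrightarrow>
      dt (\<lambda>s t. f s t * g s t) s t = dt f s t * g s t + f s t * dt g s t"
proof -
  have Ds: "t \<in> I \<Longrightarrow>
      ((\<lambda>\<sigma>. f \<sigma> t * g \<sigma> t) has_real_derivative ds f s t * g s t + f s t * ds g s t) (at s)" for s t
    using DERIV_mult[OF C1_strip_has_ds[OF f] C1_strip_has_ds[OF g]] by (simp add: mult.commute)
  have Dt: "t \<in> I \<Longrightarrow>
      ((\<lambda>\<tau>. f s \<tau> * g s \<tau>) has_real_derivative dt f s t * g s t + f s t * dt g s t) (at t)" for s t
    using DERIV_mult[OF C1_strip_has_dt[OF f] C1_strip_has_dt[OF g]] by (simp add: mult.commute)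
  show "C1_strip I (\<lambda>s t. f s t * g s t)"
    by (intro C1_stripI[OF Ds Dt] continuous_on_add continuous_on_mult
        C1_strip_continuous[OF f] C1_strip_continuous[OF g]
        C1_strip_continuous_ds[OF f] C1_strip_continuous_ds[OF g]
        C1_strip_continuous_dt[OF f] C1_strip_continuous_dt[OF g])
  show "t \<in> I \<Longrightarrow> ds (\<lambda>s t. f s t * g s t) s t = ds f s t * g s t + f s t * ds g s t"
    by (rule ds_eqI) (rule Ds)
  show "t \<in> I \<Longrightarrow> dt (\<lambda>s t. f s t * g s t) s t = dt f s t * g s t + f s t * dt g s t"
    by (rule dt_eqI) (rule Dt)
qed

lemma
  fixes F :: "R4 \<Rightarrow> real"
  assumes F: "smooth_on U F"
    and a: "C1_strip I a" and b: "C1_strip I b" and c: "C1_strip I c" and d: "C1_strip I d"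
    and in_U: "\<And>s t. t \<in> I \<Longrightarrow> (a s t, b s t, c s t, d s t) \<in> U"
  shows C1_strip_R4_comp: "C1_strip I (\<lambda>s t. F (a s t, b s t, c s t, d s t))"
    and dt_R4_comp: "t \<in> I \<Longrightarrow> dt (\<lambda>s t. F (a s t, b s t, c s t, d s t)) s t =
        dt a s t * pdiff F eA (a s t, b s t, c s t, d s t)
      + dt b s t * pdiff F eAt (a s t, b s t, c s t, d s t)
      + dt c s t * pdiff F eAs (a s t, b s t, c s t, d s t)
      + dt d s t * pdiff F eu (a s t, b s t, c s t, d s t)"
proof -
  let ?q = "\<lambda>s t. (a s t, b s t, c s t, d s t)"
  have Ds: "((\<lambda>\<sigma>. F (?q \<sigma> t)) has_real_derivative
        ds a s t * pdiff F eA (?q s t) + ds b s t * pdiff F eAt (?q s t)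
      + ds c s t * pdiff F eAs (?q s t) + ds d s t * pdiff F eu (?q s t)) (at s)"
    if "t \<in> I" for s t
    using has_real_derivative_R4_comp[where a = "\<lambda>\<sigma>. a \<sigma> t" and b = "\<lambda>\<sigma>. b \<sigma> t"
        and c = "\<lambda>\<sigma>. c \<sigma> t" and d = "\<lambda>\<sigma>. d \<sigma> t",
        OF smooth_on_imp_differentiable[OF F in_U[OF that]] C1_strip_has_ds[OF a that]
        C1_strip_has_ds[OF b that] C1_strip_has_ds[OF c that] C1_strip_has_ds[OF d that]] .
  have Dt: "((\<lambda>\<tau>. F (?q s \<tau>)) has_real_derivative
        dt a s t * pdiff F eA (?q s t) + dt b s t * pdiff F eAt (?q s t)
      + dt c s t * pdiff F eAs (?q s t) + dt d s t * pdiff F eu (?q s t)) (at t)"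
    if "t \<in> I" for s t
    using has_real_derivative_R4_comp[where a = "\<lambda>\<tau>. a s \<tau>" and b = "\<lambda>\<tau>. b s \<tau>"
        and c = "\<lambda>\<tau>. c s \<tau>" and d = "\<lambda>\<tau>. d s \<tau>",
        OF smooth_on_imp_differentiable[OF F in_U[OF that]] C1_strip_has_dt[OF a that]
        C1_strip_has_dt[OF b that] C1_strip_has_dt[OF c that] C1_strip_has_dt[OF d that]] .
  let ?Q = "\<lambda>x. (a (fst x) (snd x), b (fst x) (snd x), c (fst x) (snd x), d (fst x) (snd x))"
  have "continuous_on (UNIV \<times> I) ?Q"
    using a b c d by (intro continuous_on_Pair C1_strip_continuous)
  moreover have "?Q ` (UNIV \<times> I) \<subseteq> U" using in_U by auto
  ultimately have cont: "continuous_on (UNIV \<times> I) (\<lambda>x. G (?Q x))" if "smooth_on U G" for G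
    using continuous_on_compose2[OF smooth_on_imp_continuous_on[OF that]] by blast
  show "C1_strip I (\<lambda>s t. F (a s t, b s t, c s t, d s t))"
  proof (rule C1_stripI[OF Ds Dt])
    note cont_pdiff = cont[OF smooth_on_pdiff[OF F]]
    show "continuous_on (UNIV \<times> I) (\<lambda>x. F (?Q x))" by (rule cont[OF F])
    show "continuous_on (UNIV \<times> I) (\<lambda>x.
        ds a (fst x) (snd x) * pdiff F eA (?Q x) + ds b (fst x) (snd x) * pdiff F eAt (?Q x)
      + ds c (fst x) (snd x) * pdiff F eAs (?Q x) + ds d (fst x) (snd x) * pdiff F eu (?Q x))"
      using a b c d by (intro continuous_on_add continuous_on_mult cont_pdiff C1_strip_continuous_ds)
    show "continuous_on (UNIV \<times> I) (\<lambda>x.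
        dt a (fst x) (snd x) * pdiff F eA (?Q x) + dt b (fst x) (snd x) * pdiff F eAt (?Q x)
      + dt c (fst x) (snd x) * pdiff F eAs (?Q x) + dt d (fst x) (snd x) * pdiff F eu (?Q x))"
      using a b c d by (intro continuous_on_add continuous_on_mult cont_pdiff C1_strip_continuous_dt)
  qed
  show "t \<in> I \<Longrightarrow> dt (\<lambda>s t. F (a s t, b s t, c s t, d s t)) s t =
        dt a s t * pdiff F eA (a s t, b s t, c s t, d s t)
      + dt b s t * pdiff F eAt (a s t, b s t, c s t, d s t)
      + dt c s t * pdiff F eAs (a s t, b s t, c s t, d s t)
      + dt d s t * pdiff F eu (a s t, b s t, c s t, d s t)"
    by (rule dt_eqI) (rule Dt)
qed

lemma
  assumes "continuous_on (UNIV \<times> I) (\<lambda>x. f (fst x) (snd x))"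
  shows continuous_on_strip_section_t: "J \<subseteq> I \<Longrightarrow> continuous_on J (\<lambda>\<tau>. f s \<tau>)"
    and continuous_on_strip_section_s: "t \<in> I \<Longrightarrow> continuous_on J (\<lambda>\<sigma>. f \<sigma> t)"
proof -
  show "J \<subseteq> I \<Longrightarrow> continuous_on J (\<lambda>\<tau>. f s \<tau>)"
    using continuous_on_compose2[OF assms continuous_on_Pair[OF continuous_on_const continuous_on_id]]
    by auto
  show "t \<in> I \<Longrightarrow> continuous_on J (\<lambda>\<sigma>. f \<sigma> t)"
    using continuous_on_compose2[OF assms continuous_on_Pair[OF continuous_on_id continuous_on_const]]
    by auto
qed

lemma has_integral_dt:
  assumes f: "C1_strip I f" and "{a..b} \<subseteq> I" "a \<le> b"
  shows "((\<lambda>\<tau>. dt f s \<tau>) has_integral f s b - f s a) {a..b}"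
  using assms(3)
proof (rule fundamental_theorem_of_calculus)
  fix \<tau> assume "\<tau> \<in> {a..b}"
  with assms(2) have "\<tau> \<in> I" by blast
  from C1_strip_has_dt[OF f this]
  show "((\<lambda>\<tau>. f s \<tau>) has_vector_derivative dt f s \<tau>) (at \<tau> within {a..b})"
    unfolding has_real_derivative_iff_has_vector_derivative by (rule has_vector_derivative_at_within)
qed

lemma has_integral_ds:
  assumes f: "C1_strip I f" and "t \<in> I" "a \<le> b"
  shows "((\<lambda>\<sigma>. ds f \<sigma> t) has_integral f b t - f a t) {a..b}"
  using assms(3)
proof (rule fundamental_theorem_of_calculus)
  fix \<sigma>
  from C1_strip_has_ds[OF f assms(2)]
  show "((\<lambda>\<sigma>. f \<sigma> t) has_vector_derivative ds f \<sigma> t) (at \<sigma> within {a..b})"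
    unfolding has_real_derivative_iff_has_vector_derivative by (rule has_vector_derivative_at_within)
qed

lemma has_field_derivative_integral_dt:
  assumes f: "C1_strip I f" and I: "convex I" "t \<in> I"
  shows "((\<lambda>t. integral {a..b} (\<lambda>s. f s t)) has_field_derivative
      integral {a..b} (\<lambda>s. dt f s t)) (at t within I)"
proof -
  have "continuous_on (I \<times> cbox a b) (\<lambda>y. (snd y, fst y))" by (intro continuous_intros)
  moreover have "(\<lambda>y. (snd y, fst y)) ` (I \<times> cbox a b) \<subseteq> UNIV \<times> I" by auto
  ultimately have "continuous_on (I \<times> cbox a b) (\<lambda>y. dt f (snd y) (fst y))"
    using continuous_on_compose2[OF C1_strip_continuous_dt[OF f]] by fastforce
  then have "((\<lambda>t. integral (cbox a b) (\<lambda>s. f s t)) has_field_derivative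
      integral (cbox a b) (\<lambda>s. dt f s t)) (at t within I)"
    using f I by (intro leibniz_rule_field_derivative)
      (auto simp: split_beta cbox_interval intro: has_field_derivative_at_within C1_strip_has_dt
        integrable_continuous_interval continuous_on_strip_section_s C1_strip_continuous)
  then show ?thesis by (simp add: cbox_interval)
qed

lemma ds_diff_eq_integral_ds_dt:
  assumes f: "C1_strip I f" and ft: "C1_strip I (dt f)" and ab: "{a..b} \<subseteq> I" "a \<le> b"
  shows "ds f s b - ds f s a = integral {a..b} (\<lambda>\<tau>. ds (dt f) s \<tau>)"
proof -
  have "((\<lambda>\<sigma>. integral (cbox a b) (dt f \<sigma>)) has_field_derivative
      integral (cbox a b) (ds (dt f) s)) (at s within UNIV)"
  proof (rule leibniz_rule_field_derivative)
    have "UNIV \<times> {a..b} \<subseteq> UNIV \<times> I" using ab by auto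
    from continuous_on_subset[OF C1_strip_continuous_ds[OF ft] this]
    show "continuous_on (UNIV \<times> cbox a b) (\<lambda>(\<sigma>, \<tau>). ds (dt f) \<sigma> \<tau>)"
      by (simp add: split_beta cbox_interval)
  qed (use f ft ab in \<open>auto simp: cbox_interval intro: C1_strip_has_ds
        integrable_continuous_interval continuous_on_strip_section_t C1_strip_continuous_dt\<close>)
  moreover have "integral {a..b} (dt f \<sigma>) = f \<sigma> b - f \<sigma> a" for \<sigma>
    using has_integral_dt[OF f ab] by (rule integral_unique)
  ultimately have "((\<lambda>\<sigma>. f \<sigma> b - f \<sigma> a) has_real_derivative
      integral {a..b} (\<lambda>\<tau>. ds (dt f) s \<tau>)) (at s)"
    by (simp add: cbox_interval)
  moreover have "((\<lambda>\<sigma>. f \<sigma> b - f \<sigma> a) has_real_derivative ds f s b - ds f s a) (at s)"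
    using ab by (intro DERIV_diff C1_strip_has_ds[OF f]) auto
  ultimately show ?thesis by (rule DERIV_unique[symmetric])
qed

lemma dt_ds_commute:
  assumes I: "open I" and f: "C1_strip I f" and ft: "C1_strip I (dt f)" and t: "t \<in> I"
  shows "dt (ds f) s t = ds (dt f) s t"
proof -
  obtain e where "e > 0" "cball t e \<subseteq> I" using open_contains_cball I t by blast
  then have ab: "{t - e..t + e} \<subseteq> I" and t_in: "t \<in> {t - e<..<t + e}"
    by (auto simp: cball_eq_atLeastAtMost)
  have "continuous_on {t - e..t + e} (\<lambda>\<tau>. ds (dt f) s \<tau>)"
    by (rule continuous_on_strip_section_t[OF C1_strip_continuous_ds[OF ft] ab])
  moreover have "t \<in> {t - e..t + e}" using t_in by simp
  ultimately have "((\<lambda>\<tau>. integral {t - e..\<tau>} (\<lambda>r. ds (dt f) s r)) has_real_derivative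
      ds (dt f) s t) (at t within {t - e..t + e})"
    by (rule integral_has_real_derivative)
  moreover have "at t within {t - e..t + e} = at t"
    using t_in by (intro at_within_interior) simp
  ultimately have "((\<lambda>\<tau>. integral {t - e..\<tau>} (\<lambda>r. ds (dt f) s r)) has_real_derivative
      ds (dt f) s t) (at t)"
    by simp
  then have "((\<lambda>\<tau>. ds f s (t - e) + integral {t - e..\<tau>} (\<lambda>r. ds (dt f) s r))
      has_real_derivative ds (dt f) s t) (at t)"
    by (auto intro!: derivative_eq_intros)
  then have "((\<lambda>\<tau>. ds f s \<tau>) has_real_derivative ds (dt f) s t) (at t)"
  proof (rule has_field_derivative_transform_within_open[OF _ open_greaterThanLessThan t_in])
    fix \<tau> assume "\<tau> \<in> {t - e<..<t + e}"
    with ab have "{t - e..\<tau>} \<subseteq> I" "t - e \<le> \<tau>" by auto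
    from ds_diff_eq_integral_ds_dt[OF f ft this, of s]
    show "ds f s (t - e) + integral {t - e..\<tau>} (\<lambda>r. ds (dt f) s r) = ds f s \<tau>" by simp
  qed
  then show ?thesis by (rule dt_eqI)
qed

lemma integral_eq_if_conservation_law:
  assumes I: "convex I" and e: "C1_strip I e" and G: "C1_strip I G" and "a \<le> b"
    and balance: "\<And>s t. t \<in> I \<Longrightarrow> dt e s t = - ds G s t"
    and boundary: "\<And>t. t \<in> I \<Longrightarrow> G b t = G a t"
    and "t1 \<in> I" "t2 \<in> I"
  shows "integral {a..b} (\<lambda>s. e s t1) = integral {a..b} (\<lambda>s. e s t2)"
proof -
  have "((\<lambda>t. integral {a..b} (\<lambda>s. e s t)) has_field_derivative 0) (at t within I)"
    if t: "t \<in> I" for t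
  proof -
    have "((\<lambda>s. dt e s t) has_integral - (G b t - G a t)) {a..b}"
      using has_integral_neg[OF has_integral_ds[OF G t \<open>a \<le> b\<close>]] balance[OF t] by simp
    then have "integral {a..b} (\<lambda>s. dt e s t) = 0"
      using boundary[OF t] integral_unique by simp
    then show ?thesis
      using has_field_derivative_integral_dt[OF e I t, of a b] by simp
  qed
  then obtain c where "\<forall>t\<in>I. integral {a..b} (\<lambda>s. e s t) = c"
    using has_field_derivative_zero_constant[OF I] by blast
  with assms(7,8) show ?thesis by simp
qed

locale tube_motion =
  fixes l :: "R4 \<Rightarrow> real" and U :: "R4 set" and I :: "real set"
    and A u p :: "real \<Rightarrow> real \<Rightarrow> real" and pext :: real
  assumes l_smooth: "smooth_on U l"
    and I_open: "open I"
    and A_smooth: "smooth_on (UNIV \<times> I) (\<lambda>(s, t). A s t)"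
    and u_smooth: "smooth_on (UNIV \<times> I) (\<lambda>(s, t). u s t)"
    and p_smooth: "smooth_on (UNIV \<times> I) (\<lambda>(s, t). p s t)"
    and in_U: "\<And>s t. t \<in> I \<Longrightarrow> (A s t, dt A s t, ds A s t, u s t) \<in> U"
    and eq_u: "\<And>s t. t \<in> I \<Longrightarrow>
        dt (\<lambda>s t. pdiff l eu (A s t, dt A s t, ds A s t, u s t)) s t
        + u s t * ds (\<lambda>s t. pdiff l eu (A s t, dt A s t, ds A s t, u s t)) s t
        + 2 * pdiff l eu (A s t, dt A s t, ds A s t, u s t) * ds u s t
        = - A s t * ds p s t"
    and eq_A: "\<And>s t. t \<in> I \<Longrightarrow>
        dt (\<lambda>s t. pdiff l eAt (A s t, dt A s t, ds A s t, u s t)) s t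
        + ds (\<lambda>s t. pdiff l eAs (A s t, dt A s t, ds A s t, u s t)) s t
        - pdiff l eA (A s t, dt A s t, ds A s t, u s t)
        = p s t - pext"
    and eq_mass: "\<And>s t. t \<in> I \<Longrightarrow> dt A s t + ds (\<lambda>s t. A s t * u s t) s t = 0"
begin

abbreviation jet :: "real \<Rightarrow> real \<Rightarrow> R4" where
  "jet s t \<equiv> (A s t, dt A s t, ds A s t, u s t)"

abbreviation l_jet :: "real \<Rightarrow> real \<Rightarrow> real" where "l_jet s t \<equiv> l (jet s t)"
abbreviation l_A :: "real \<Rightarrow> real \<Rightarrow> real" where "l_A s t \<equiv> pdiff l eA (jet s t)"
abbreviation l_At :: "real \<Rightarrow> real \<Rightarrow> real" where "l_At s t \<equiv> pdiff l eAt (jet s t)"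
abbreviation l_As :: "real \<Rightarrow> real \<Rightarrow> real" where "l_As s t \<equiv> pdiff l eAs (jet s t)"
abbreviation l_u :: "real \<Rightarrow> real \<Rightarrow> real" where "l_u s t \<equiv> pdiff l eu (jet s t)"

definition energy_density :: "real \<Rightarrow> real \<Rightarrow> real" where
  "energy_density s t = l_At s t * dt A s t + l_u s t * u s t - l_jet s t"

definition energy_flux :: "real \<Rightarrow> real \<Rightarrow> real" where
  "energy_flux s t = l_As s t * dt A s t + u s t * u s t * l_u s t + (p s t - pext) * (A s t * u s t)"

lemmas C1_strip_A [simp] = C1_strip_smooth[OF A_smooth I_open]
  and C1_strip_dt_A [simp] = C1_strip_dt_smooth[OF A_smooth I_open]
  and C1_strip_ds_A [simp] = C1_strip_ds_smooth[OF A_smooth I_open]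
  and C1_strip_u [simp] = C1_strip_smooth[OF u_smooth I_open]
  and C1_strip_p [simp] = C1_strip_smooth[OF p_smooth I_open]

lemma C1_strip_jet_comp [simp]: "smooth_on U F \<Longrightarrow> C1_strip I (\<lambda>s t. F (jet s t))"
  by (rule C1_strip_R4_comp[OF _ C1_strip_A C1_strip_dt_A C1_strip_ds_A C1_strip_u in_U])

lemmas dt_jet_comp = dt_R4_comp[OF _ C1_strip_A C1_strip_dt_A C1_strip_ds_A C1_strip_u in_U]

lemma C1_strip_energy_density: "C1_strip I energy_density"
  unfolding energy_density_def [abs_def] by (simp add: l_smooth smooth_on_pdiff)

lemma C1_strip_energy_flux: "C1_strip I energy_flux"
  unfolding energy_flux_def [abs_def] by (simp add: l_smooth smooth_on_pdiff)

lemma dt_energy_density: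
  assumes "t \<in> I"
  shows "dt energy_density s t =
    dt l_At s t * dt A s t + dt l_u s t * u s t - dt A s t * l_A s t - dt (ds A) s t * l_As s t"
proof -
  have "dt energy_density s t =
      (dt l_At s t * dt A s t + l_At s t * dt (dt A) s t) + (dt l_u s t * u s t + l_u s t * dt u s t)
    - (dt A s t * l_A s t + dt (dt A) s t * l_At s t + dt (ds A) s t * l_As s t + dt u s t * l_u s t)"
    unfolding energy_density_def [abs_def] using assms
    by (simp add: l_smooth smooth_on_pdiff dt_diff[of I] dt_add[of I] dt_mult[of I]
        dt_jet_comp[OF l_smooth])
  then show ?thesis by (simp add: algebra_simps)
qed

lemma ds_energy_flux:
  assumes "t \<in> I"
  shows "ds energy_flux s t =
      ds l_As s t * dt A s t + l_As s t * ds (dt A) s t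
    + 2 * u s t * ds u s t * l_u s t + u s t * u s t * ds l_u s t
    + ds p s t * (A s t * u s t) + (p s t - pext) * ds (\<lambda>s t. A s t * u s t) s t"
  unfolding energy_flux_def [abs_def] using assms
  by (simp add: l_smooth smooth_on_pdiff ds_add[of I] ds_diff[of I] ds_mult[of I]
        algebra_simps)

lemma energy_flux_balance:
  assumes t: "t \<in> I"
  shows "dt energy_density s t = - ds energy_flux s t"
proof -
  \<comment> \<open>Each bracket is the left-hand side of an equation of motion.\<close>
  have "dt energy_density s t + ds energy_flux s t =
      dt A s t * (dt l_At s t + ds l_As s t - l_A s t)
    + u s t * (dt l_u s t + u s t * ds l_u s t + 2 * l_u s t * ds u s t)
    + A s t * u s t * ds p s t + (p s t - pext) * ds (\<lambda>s t. A s t * u s t) s t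
    + l_As s t * (ds (dt A) s t - dt (ds A) s t)"
    using t by (simp add: dt_energy_density ds_energy_flux algebra_simps)
  also have "\<dots> = (p s t - pext) * (dt A s t + ds (\<lambda>s t. A s t * u s t) s t)"
    unfolding eq_A[OF t] eq_u[OF t] dt_ds_commute[OF I_open C1_strip_A C1_strip_dt_A t]
    by (simp add: algebra_simps)
  also have "\<dots> = 0"
    unfolding eq_mass[OF t] by simp
  finally show ?thesis by simp
qed

lemma energy_flux_periodic:
  assumes "\<And>s t. A (s + L) t = A s t" "\<And>s t. u (s + L) t = u s t" "\<And>s t. p (s + L) t = p s t"
    and t: "t \<in> I"
  shows "energy_flux (s + L) t = energy_flux s t"
proof -
  have "dt A (s + L) t = dt A s t" using assms(1) by (rule dt_periodic)
  moreover have "ds A (s + L) t = ds A s t"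
    using C1_strip_has_ds[OF C1_strip_A t] assms(1) by (rule ds_periodic)
  ultimately show ?thesis unfolding energy_flux_def by (simp add: assms(1-3))
qed

end

theorem mainTheorem1:
  fixes L pext :: real
    and l :: "R4 \<Rightarrow> real"
    and U :: "R4 set"
    and I :: "real set"
    and A u p :: "real \<Rightarrow> real \<Rightarrow> real"
  assumes L_pos: "L > 0"
    and U_open: "open U"
    and l_smooth: "smooth_on U l"
    and I_open: "open I" and I_interval: "is_interval I"
    and A_smooth: "smooth_on (UNIV \<times> I) (\<lambda>(s, t). A s t)"
    and u_smooth: "smooth_on (UNIV \<times> I) (\<lambda>(s, t). u s t)"
    and p_smooth: "smooth_on (UNIV \<times> I) (\<lambda>(s, t). p s t)"
    and A_per: "\<And>s t. A (s + L) t = A s t"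
    and u_per: "\<And>s t. u (s + L) t = u s t"
    and p_per: "\<And>s t. p (s + L) t = p s t"
    and in_U: "\<And>s t. t \<in> I \<Longrightarrow> (A s t, dt A s t, ds A s t, u s t) \<in> U"
    and eq_u: "\<And>s t. t \<in> I \<Longrightarrow>
        dt (\<lambda>s t. pdiff l eu (A s t, dt A s t, ds A s t, u s t)) s t
        + u s t * ds (\<lambda>s t. pdiff l eu (A s t, dt A s t, ds A s t, u s t)) s t
        + 2 * pdiff l eu (A s t, dt A s t, ds A s t, u s t) * ds u s t
        = - A s t * ds p s t"
    and eq_A: "\<And>s t. t \<in> I \<Longrightarrow>
        dt (\<lambda>s t. pdiff l eAt (A s t, dt A s t, ds A s t, u s t)) s t
        + ds (\<lambda>s t. pdiff l eAs (A s t, dt A s t, ds A s t, u s t)) s t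
        - pdiff l eA (A s t, dt A s t, ds A s t, u s t)
        = p s t - pext"
    and eq_mass: "\<And>s t. t \<in> I \<Longrightarrow> dt A s t + ds (\<lambda>s t. A s t * u s t) s t = 0"
  shows "\<forall>t1\<in>I. \<forall>t2\<in>I.
     integral {0..L} (\<lambda>s. pdiff l eAt (A s t1, dt A s t1, ds A s t1, u s t1) * dt A s t1
        + pdiff l eu (A s t1, dt A s t1, ds A s t1, u s t1) * u s t1
        - l (A s t1, dt A s t1, ds A s t1, u s t1))
   = integral {0..L} (\<lambda>s. pdiff l eAt (A s t2, dt A s t2, ds A s t2, u s t2) * dt A s t2
        + pdiff l eu (A s t2, dt A s t2, ds A s t2, u s t2) * u s t2
        - l (A s t2, dt A s t2, ds A s t2, u s t2))"
proof -
  interpret tube_motion l U I A u p pext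
    by (unfold_locales; fact assms)
  have flux_periodic: "energy_flux L t = energy_flux 0 t" if "t \<in> I" for t
    using energy_flux_periodic[OF A_per u_per p_per that, of 0] by simp
  have "integral {0..L} (\<lambda>s. energy_density s t1) = integral {0..L} (\<lambda>s. energy_density s t2)"
    if "t1 \<in> I" "t2 \<in> I" for t1 t2
    using is_interval_convex_1[THEN iffD1, OF I_interval] L_pos that
    by (intro integral_eq_if_conservation_law[OF _ C1_strip_energy_density C1_strip_energy_flux _
          energy_flux_balance flux_periodic]) auto
  then show ?thesis unfolding energy_density_def by blast
qed

end
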